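(* The following formulae provide biholomorphisms between the corresponding domains: \begin{itemize} \item $\mathbb L_2\ni w\mapsto (2iw_2,-w_1-w_2^2)\in \mathbb G_2$, \item $\mathbb L_3\ni w\mapsto (w_2+iw_3,-w_2+iw_3,-w_3^2-w_2^2-w_1)\in\mathbb E$, \item $\mathbb L_4\ni w\mapsto (w_3+iw_4,-w_3+iw_4,-w_2^2-w_3^2-w_4^2-w_1,2w_2)\in\mathbb F$. \end{itemize}
   Context: $L_n=\{z\in\mathbb B_n: \sqrt{(\sum_{j=1}^n|z_j|^2)^2-|\sum_{j=1}^nz_j^2|^2}<1-\sum_{j=1}^n|z_j|^2\}$ is the Lie ball and $\mathbb L_n:=\Lambda_n(L_n)$ with $\Lambda_n(z)=(z_1^2,z_2,\ldots,z_n)$. The symmetrized bidisc is $\mathbb G_2=\{(\lambda_1+\lambda_2,\lambda_1\lambda_2):\lambda_1,\lambda_2\in\mathbb D\}$. The tetrablock is $\mathbb E=\{(a_{11},a_{22},a_{11}a_{22}-a^2): \begin{pmatrix} a_{11} & a\\ a & a_{22}\end{pmatrix}\in\mathcal R_{III}(2)\}$, where $\mathcal R_{III}(2)$ is the set of symmetric $2\times 2$ complex matrices of operator norm $<1$. The domain $\mathbb F=\{(a_{11},a_{22},a_{11}a_{22}-a_{12}a_{21},a_{12}+a_{21}): \begin{pmatrix} a_{11} & a_{12}\\ a_{21} & a_{22}\end{pmatrix}\in\mathcal R_{I}(2\times 2)\}$, where $\mathcal R_{I}(2\times 2)$ is the set of $2\times 2$ complex matrices of operator norm $<1$. *)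

theory Defs
  imports "HOL-Analysis.Analysis"
begin

definition holo_vec_on :: "(complex^'n \<Rightarrow> complex^'m) \<Rightarrow> (complex^'n) set \<Rightarrow> bool" where
  "holo_vec_on f S \<longleftrightarrow>
     (\<forall>x\<in>S. \<exists>D. (f has_derivative D) (at x) \<and> (\<forall>(c::complex) v. D (c *s v) = c *s D v))"

definition biholomorphism :: "(complex^'n \<Rightarrow> complex^'m) \<Rightarrow> (complex^'n) set \<Rightarrow> (complex^'m) set \<Rightarrow> bool" where
  "biholomorphism f A B \<longleftrightarrow>
     open A \<and> open B \<and> bij_betw f A B \<and> holo_vec_on f A \<and> holo_vec_on (inv_into A f) B"

definition lie_ball :: "(complex^'n) set" where
  "lie_ball = {z. (\<Sum>j\<in>UNIV. (cmod (z$j))\<^sup>2) < 1 \<and>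
      sqrt (((\<Sum>j\<in>UNIV. (cmod (z$j))\<^sup>2))\<^sup>2 - (cmod (\<Sum>j\<in>UNIV. (z$j)\<^sup>2))\<^sup>2)
        < 1 - (\<Sum>j\<in>UNIV. (cmod (z$j))\<^sup>2)}"

definition Lambda_map :: "complex^('n::{finite,one}) \<Rightarrow> complex^('n::{finite,one})" where
  "Lambda_map z = (\<chi> j. if j = 1 then (z$1)\<^sup>2 else z$j)"

definition LL :: "(complex^('n::{finite,one})) set" where
  "LL = Lambda_map ` lie_ball"

definition symm_bidisc :: "(complex^2) set" where
  "symm_bidisc = {vector [l1 + l2, l1 * l2] | l1 l2. cmod l1 < 1 \<and> cmod l2 < 1}"

definition mat_opnorm :: "complex^'n^'m \<Rightarrow> real" where
  "mat_opnorm A = onorm (\<lambda>x. A *v x)"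

definition tetrablock :: "(complex^3) set" where
  "tetrablock = {vector [A$1$1, A$2$2, A$1$1 * A$2$2 - (A$1$2)\<^sup>2] | A :: complex^2^2.
                  A$1$2 = A$2$1 \<and> mat_opnorm A < 1}"

definition domF :: "(complex^4) set" where
  "domF = {vector [A$1$1, A$2$2, A$1$1 * A$2$2 - A$1$2 * A$2$1, A$1$2 + A$2$1] | A :: complex^2^2.
                  mat_opnorm A < 1}"

end

theory Submission
  imports Defs
begin

text \<open>
  Each map is polynomial with a polynomial inverse g, hence a biholomorphism of LL onto
  g^-1(LL); it remains to identify this preimage with the target domain.
  With s = sum |z_j|^2 and q = sum z_j^2, the Lie ball is given by s < 1 and
  2s < 1 + |q|^2, so LL is given by the same inequalities with
  s = |w_1| + sum_{j>=2} |w_j|^2 and q = w_1 + sum_{j>=2} w_j^2.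
  A 2 by 2 matrix A has operator norm < 1 iff 1 - A^* A is positive definite, i.e. iff
  the same inequalities hold for s = ||A||^2/2 (Frobenius norm) and q = det A.
  All matrices representing a given point of the tetrablock or of F have the same
  Frobenius norm and determinant, and g carries these to s and -q. For the symmetrized
  bidisc, the inequalities with s = (|l_1|^2 + |l_2|^2)/2 and q = l_1 l_2 say exactly
  that |l_1|, |l_2| < 1.
\<close>

section \<open>Polynomial maps are holomorphic\<close>

inductive cpoly_fun :: "(complex^'n \<Rightarrow> complex) \<Rightarrow> bool" where
  const: "cpoly_fun (\<lambda>w. c)"
| nth: "cpoly_fun (\<lambda>w. w $ j)"
| add: "cpoly_fun p \<Longrightarrow> cpoly_fun q \<Longrightarrow> cpoly_fun (\<lambda>w. p w + q w)"
| diff: "cpoly_fun p \<Longrightarrow> cpoly_fun q \<Longrightarrow> cpoly_fun (\<lambda>w. p w - q w)"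
| mult: "cpoly_fun p \<Longrightarrow> cpoly_fun q \<Longrightarrow> cpoly_fun (\<lambda>w. p w * q w)"
| uminus: "cpoly_fun p \<Longrightarrow> cpoly_fun (\<lambda>w. - p w)"
| power: "cpoly_fun p \<Longrightarrow> cpoly_fun (\<lambda>w. p w ^ k)"
| divide_const: "cpoly_fun p \<Longrightarrow> cpoly_fun (\<lambda>w. p w / c)"

lemma cpoly_fun_has_complex_linear_derivative:
  assumes "cpoly_fun p"
  shows "\<exists>D. (p has_derivative D) (at x) \<and> (\<forall>c v. D (c *s v) = c * D v)"
  using assms
proof induction
  case (const c)
  show ?case by (intro exI[of _ "\<lambda>v. 0"]) auto
next
  case (nth j)
  show ?case by (intro exI[of _ "\<lambda>v. v $ j"]) (auto intro: bounded_linear_imp_has_derivative)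
next
  case (add p q)
  then obtain Dp Dq where "(p has_derivative Dp) (at x)" "\<forall>c v. Dp (c *s v) = c * Dp v"
    "(q has_derivative Dq) (at x)" "\<forall>c v. Dq (c *s v) = c * Dq v" by blast
  then show ?case
    by (intro exI[of _ "\<lambda>v. Dp v + Dq v"]) (auto intro: has_derivative_add simp: algebra_simps)
next
  case (diff p q)
  then obtain Dp Dq where "(p has_derivative Dp) (at x)" "\<forall>c v. Dp (c *s v) = c * Dp v"
    "(q has_derivative Dq) (at x)" "\<forall>c v. Dq (c *s v) = c * Dq v" by blast
  then show ?case
    by (intro exI[of _ "\<lambda>v. Dp v - Dq v"]) (auto intro: has_derivative_diff simp: algebra_simps)
next
  case (mult p q)
  then obtain Dp Dq where "(p has_derivative Dp) (at x)" "\<forall>c v. Dp (c *s v) = c * Dp v"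
    "(q has_derivative Dq) (at x)" "\<forall>c v. Dq (c *s v) = c * Dq v" by blast
  then show ?case
    by (intro exI[of _ "\<lambda>v. p x * Dq v + Dp v * q x"] conjI has_derivative_mult)
      (auto simp: algebra_simps)
next
  case (uminus p)
  then obtain Dp where "(p has_derivative Dp) (at x)" "\<forall>c v. Dp (c *s v) = c * Dp v" by blast
  then show ?case
    by (intro exI[of _ "\<lambda>v. - Dp v"]) (auto intro: has_derivative_minus)
next
  case (power p k)
  then obtain Dp where "(p has_derivative Dp) (at x)" "\<forall>c v. Dp (c *s v) = c * Dp v" by blast
  then show ?case
    by (intro exI[of _ "\<lambda>v. of_nat k * Dp v * p x ^ (k - 1)"] conjI has_derivative_power)
      (auto simp: algebra_simps)
next
  case (divide_const p c)
  then obtain Dp where "(p has_derivative Dp) (at x)" "\<forall>c v. Dp (c *s v) = c * Dp v" by blast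
  then show ?case
    by (intro exI[of _ "\<lambda>v. Dp v / c"])
      (auto intro: bounded_linear.has_derivative[OF bounded_linear_divide])
qed

lemma has_derivative_vec_componentwise:
  fixes f :: "'a::real_normed_vector \<Rightarrow> 'b::euclidean_space^'n"
  assumes "\<And>i. ((\<lambda>x. f x $ i) has_derivative D i) (at a)"
  shows "(f has_derivative (\<lambda>v. \<chi> i. D i v)) (at a)"
proof -
  have "((\<lambda>x. f x \<bullet> b) has_derivative (\<lambda>v. (\<chi> i. D i v) \<bullet> b)) (at a)" if "b \<in> Basis" for b
  proof -
    from that obtain i u where b: "b = axis i u" and "u \<in> Basis" by (auto simp: Basis_vec_def)
    have "((\<lambda>x. f x $ i \<bullet> u) has_derivative (\<lambda>v. D i v \<bullet> u)) (at a)"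
      using bounded_linear.has_derivative[OF bounded_linear_inner_left assms] .
    then show ?thesis by (simp add: b inner_axis)
  qed
  then show ?thesis using has_derivative_componentwise_within[of f _ a UNIV] by auto
qed

lemma holo_vec_on_cpoly_fun:
  fixes f :: "complex^'n \<Rightarrow> complex^'m"
  assumes "\<And>i. cpoly_fun (\<lambda>w. f w $ i)"
  shows "holo_vec_on f S"
  unfolding holo_vec_on_def
proof
  fix x
  have "\<forall>i. \<exists>D. ((\<lambda>w. f w $ i) has_derivative D) (at x) \<and> (\<forall>c v. D (c *s v) = c * D v)"
    using cpoly_fun_has_complex_linear_derivative[OF assms] by blast
  then obtain D where D: "\<And>i. ((\<lambda>w. f w $ i) has_derivative D i) (at x)"
    "\<And>i c v. D i (c *s v) = c * D i v"
    by metis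
  show "\<exists>D. (f has_derivative D) (at x) \<and> (\<forall>(c::complex) v. D (c *s v) = c *s D v)"
    by (intro exI[of _ "\<lambda>v. \<chi> i. D i v"] conjI has_derivative_vec_componentwise D allI)
      (simp add: vec_eq_iff D)
qed

lemma biholomorphism_if_holomorphic_inverse:
  fixes f :: "complex^'n \<Rightarrow> complex^'m" and g :: "complex^'m \<Rightarrow> complex^'n"
  assumes "holo_vec_on f UNIV" "holo_vec_on g UNIV"
    and gf: "\<And>x. g (f x) = x" and fg: "\<And>y. f (g y) = y"
    and "open A"
  shows "biholomorphism f A (g -` A)"
proof -
  have "continuous (at x) g" for x
    using \<open>holo_vec_on g UNIV\<close> has_derivative_continuous unfolding holo_vec_on_def by blast
  then have "open (g -` A)"
    using \<open>open A\<close> by (rule continuous_open_vimage[rotated])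
  moreover have bij: "bij_betw f A (g -` A)"
    by (rule bij_betw_byWitness[of _ g]) (auto simp: gf fg)
  moreover have "holo_vec_on (inv_into A f) (g -` A)"
    unfolding holo_vec_on_def
  proof
    fix y assume y: "y \<in> g -` A"
    obtain D where D: "(g has_derivative D) (at y)" "\<forall>(c::complex) v. D (c *s v) = c *s D v"
      using \<open>holo_vec_on g UNIV\<close> unfolding holo_vec_on_def by blast
    have "inv_into A f y' = g y'" if "y' \<in> g -` A" for y'
      using inv_into_f_f[OF bij_betw_imp_inj_on[OF bij], of "g y'"] that
      by (simp add: fg)
    then have "(inv_into A f has_derivative D) (at y)"
      using has_derivative_transform_within_open[OF D(1) \<open>open (g -` A)\<close> y] by simp
    then show "\<exists>D. (inv_into A f has_derivative D) (at y) \<and> (\<forall>(c::complex) v. D (c *s v) = c *s D v)"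
      using D(2) by blast
  qed
  moreover have "holo_vec_on f A"
    using \<open>holo_vec_on f UNIV\<close> unfolding holo_vec_on_def by blast
  ultimately show ?thesis
    using \<open>open A\<close> unfolding biholomorphism_def by blast
qed

section \<open>The Lie ball and its image\<close>

definition lie_ball_ineq :: "real \<Rightarrow> complex \<Rightarrow> bool" where
  "lie_ball_ineq s q \<longleftrightarrow> s < 1 \<and> 2 * s < 1 + (cmod q)\<^sup>2"

lemma lie_ball_ineq_uminus [simp]: "lie_ball_ineq s (- q) \<longleftrightarrow> lie_ball_ineq s q"
  by (simp add: lie_ball_ineq_def)

lemma mem_lie_ball_iff:
  "z \<in> lie_ball \<longleftrightarrow> lie_ball_ineq (\<Sum>j\<in>UNIV. (cmod (z$j))\<^sup>2) (\<Sum>j\<in>UNIV. (z$j)\<^sup>2)"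
proof -
  define s where "s = (\<Sum>j\<in>UNIV. (cmod (z$j))\<^sup>2)"
  define q where "q = (\<Sum>j\<in>UNIV. (z$j)\<^sup>2)"
  have "z \<in> lie_ball \<longleftrightarrow> s < 1 \<and> sqrt (s\<^sup>2 - (cmod q)\<^sup>2) < 1 - s"
    by (simp add: lie_ball_def s_def q_def)
  moreover have "sqrt (s\<^sup>2 - (cmod q)\<^sup>2) < 1 - s \<longleftrightarrow> s\<^sup>2 - (cmod q)\<^sup>2 < (1 - s)\<^sup>2" if "s < 1"
    using real_sqrt_less_iff[of "s\<^sup>2 - (cmod q)\<^sup>2" "(1 - s)\<^sup>2"] that by simp
  ultimately show ?thesis
    unfolding lie_ball_ineq_def s_def[symmetric] q_def[symmetric] by (auto simp: power2_diff)
qed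

lemma sums_Lambda_map:
  fixes z :: "complex^('n::{finite,one})"
  shows "(\<Sum>j\<in>UNIV. (cmod (z$j))\<^sup>2)
           = cmod (Lambda_map z $ 1) + (\<Sum>j\<in>UNIV-{1}. (cmod (Lambda_map z $ j))\<^sup>2)"
    and "(\<Sum>j\<in>UNIV. (z$j)\<^sup>2) = Lambda_map z $ 1 + (\<Sum>j\<in>UNIV-{1}. (Lambda_map z $ j)\<^sup>2)"
  by (simp_all add: sum.remove[of UNIV 1] Lambda_map_def norm_power)

lemma mem_LL_iff:
  fixes w :: "complex^('n::{finite,one})"
  shows "w \<in> LL \<longleftrightarrow> lie_ball_ineq (cmod (w$1) + (\<Sum>j\<in>UNIV-{1}. (cmod (w$j))\<^sup>2))
                                   (w$1 + (\<Sum>j\<in>UNIV-{1}. (w$j)\<^sup>2))"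
    (is "_ \<longleftrightarrow> ?ineq w")
proof
  assume "w \<in> LL"
  then obtain z where "z \<in> lie_ball" "w = Lambda_map z" by (auto simp: LL_def)
  then show "?ineq w" by (simp add: mem_lie_ball_iff sums_Lambda_map)
next
  assume "?ineq w"
  define z where "z = ((\<chi> j. if j = 1 then csqrt (w$1) else w$j) :: complex^('n::{finite,one}))"
  have "Lambda_map z = w" by (simp add: vec_eq_iff Lambda_map_def z_def)
  with \<open>?ineq w\<close> have "z \<in> lie_ball" by (simp add: mem_lie_ball_iff sums_Lambda_map)
  with \<open>Lambda_map z = w\<close> show "w \<in> LL" unfolding LL_def by blast
qed

lemma open_LL: "open (LL :: (complex^('n::{finite,one})) set)"
proof -
  have LL_eq: "LL =
      {w::complex^('n::{finite,one}). cmod (w$1) + (\<Sum>j\<in>UNIV-{1}. (cmod (w$j))\<^sup>2) < 1}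
           \<inter> {w. 2 * (cmod (w$1) + (\<Sum>j\<in>UNIV-{1}. (cmod (w$j))\<^sup>2))
                 < 1 + (cmod (w$1 + (\<Sum>j\<in>UNIV-{1}. (w$j)\<^sup>2)))\<^sup>2}"
    using mem_LL_iff by (auto simp: lie_ball_ineq_def)
  show ?thesis
    unfolding LL_eq by (intro open_Int open_Collect_less continuous_intros)
qed

lemma sum_UNIV_minus_1_2: "(\<Sum>j\<in>UNIV-{1}. f j) = f (2::2)"
proof -
  have "UNIV - {1} = {2::2}" using UNIV_2 by auto
  then show ?thesis by simp
qed

lemma sum_UNIV_minus_1_3: "(\<Sum>j\<in>UNIV-{1}. f j) = f (2::3) + f 3"
proof -
  have "UNIV - {1} = {2, 3::3}" using UNIV_3 by auto
  then show ?thesis by simp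
qed

lemma sum_UNIV_minus_1_4: "(\<Sum>j\<in>UNIV-{1}. f j) = f (2::4) + f 3 + f 4"
proof -
  have "UNIV - {1} = {2, 3, 4::4}" using UNIV_4 by auto
  then show ?thesis by (simp add: add.assoc)
qed

section \<open>Contractive 2 by 2 matrices\<close>

lemma onorm_less_1_iff:
  fixes f :: "'a::{real_normed_vector, perfect_space} \<Rightarrow> 'b::real_normed_vector"
  assumes "bounded_linear f"
  shows "onorm f < 1 \<longleftrightarrow> (\<exists>e>0. \<forall>x. (norm (f x))\<^sup>2 + e * (norm x)\<^sup>2 \<le> (norm x)\<^sup>2)"
proof
  assume "onorm f < 1"
  show "\<exists>e>0. \<forall>x. (norm (f x))\<^sup>2 + e * (norm x)\<^sup>2 \<le> (norm x)\<^sup>2"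
  proof (intro exI conjI allI)
    show "0 < 1 - (onorm f)\<^sup>2"
      using \<open>onorm f < 1\<close> onorm_pos_le[OF assms] by (simp add: abs_square_less_1)
    fix x
    have "norm (f x) \<le> onorm f * norm x"
      by (rule onorm[OF assms])
    then have "(norm (f x))\<^sup>2 \<le> (onorm f)\<^sup>2 * (norm x)\<^sup>2"
      by (metis norm_ge_zero power_mono power_mult_distrib)
    then show "(norm (f x))\<^sup>2 + (1 - (onorm f)\<^sup>2) * (norm x)\<^sup>2 \<le> (norm x)\<^sup>2"
      by (simp add: algebra_simps)
  qed
next
  assume "\<exists>e>0. \<forall>x. (norm (f x))\<^sup>2 + e * (norm x)\<^sup>2 \<le> (norm x)\<^sup>2"
  then obtain e where "e > 0" and e: "\<And>x. (norm (f x))\<^sup>2 + e * (norm x)\<^sup>2 \<le> (norm x)\<^sup>2"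
    by blast
  define k where "k = sqrt (1 - min e 1)"
  have "norm (f x) \<le> k * norm x" for x
  proof -
    have "min e 1 * (norm x)\<^sup>2 \<le> e * (norm x)\<^sup>2"
      by (intro mult_right_mono) auto
    then have "(norm (f x))\<^sup>2 \<le> (1 - min e 1) * (norm x)\<^sup>2"
      using e[of x] by (simp add: algebra_simps)
    then have "norm (f x) \<le> sqrt ((1 - min e 1) * (norm x)\<^sup>2)"
      by (rule real_le_rsqrt)
    then show ?thesis
      by (simp add: k_def real_sqrt_mult)
  qed
  then have "onorm f \<le> k"
    by (rule onorm_le)
  also have "k < 1"
    using \<open>e > 0\<close> by (simp add: k_def)
  finally show "onorm f < 1" .
qed

text \<open>The Hermitian form of the matrix with rows (p, -q) and (-cnj q, r).\<close>

definition hermitian_form2 :: "real \<Rightarrow> real \<Rightarrow> complex \<Rightarrow> complex \<Rightarrow> complex \<Rightarrow> real" where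
  "hermitian_form2 p r q x1 x2 = p * (cmod x1)\<^sup>2 + r * (cmod x2)\<^sup>2 - 2 * Re (q * cnj x1 * x2)"

lemma real_quadratic_form_nonneg:
  fixes a c m u v :: real
  assumes "0 < a" "m\<^sup>2 \<le> a * c"
  shows "2 * m * u * v \<le> a * u\<^sup>2 + c * v\<^sup>2"
proof -
  have "a * (a * u\<^sup>2 + c * v\<^sup>2 - 2 * m * u * v) = (a * u - m * v)\<^sup>2 + (a * c - m\<^sup>2) * v\<^sup>2"
    by (simp add: algebra_simps power2_eq_square)
  also have "\<dots> \<ge> 0"
    using assms(2) by simp
  finally show ?thesis
    using assms(1) by (simp add: zero_le_mult_iff)
qed

lemma hermitian_form2_nonneg:
  assumes "0 < p" "(cmod q)\<^sup>2 \<le> p * r"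
  shows "0 \<le> hermitian_form2 p r q x1 x2"
proof -
  have "Re (q * cnj x1 * x2) \<le> cmod q * cmod x1 * cmod x2"
    using complex_Re_le_cmod[of "q * cnj x1 * x2"] by (simp add: norm_mult)
  moreover have "2 * cmod q * cmod x1 * cmod x2 \<le> p * (cmod x1)\<^sup>2 + r * (cmod x2)\<^sup>2"
    using real_quadratic_form_nonneg[OF assms] by simp
  ultimately show ?thesis
    unfolding hermitian_form2_def by linarith
qed

lemma hermitian_form2_coercive_iff:
  "(\<exists>e>0. \<forall>x1 x2. e * ((cmod x1)\<^sup>2 + (cmod x2)\<^sup>2) \<le> hermitian_form2 p r q x1 x2)
     \<longleftrightarrow> 0 < p + r \<and> (cmod q)\<^sup>2 < p * r"
proof
  assume "\<exists>e>0. \<forall>x1 x2. e * ((cmod x1)\<^sup>2 + (cmod x2)\<^sup>2) \<le> hermitian_form2 p r q x1 x2"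
  then obtain e where "e > 0"
    and e: "\<And>x1 x2. e * ((cmod x1)\<^sup>2 + (cmod x2)\<^sup>2) \<le> hermitian_form2 p r q x1 x2"
    by blast
  have "0 < p" and "0 < r"
    using e[of 1 0] e[of 0 1] \<open>e > 0\<close> by (simp_all add: hermitian_form2_def)
  have "hermitian_form2 p r q q (of_real p) = p * (p * r - (cmod q)\<^sup>2)"
    unfolding hermitian_form2_def cmod_power2 by (simp add: power2_eq_square algebra_simps)
  moreover have "0 < e * ((cmod q)\<^sup>2 + (cmod (of_real p))\<^sup>2)"
    using \<open>e > 0\<close> \<open>0 < p\<close> by (intro mult_pos_pos add_nonneg_pos) auto
  ultimately have "0 < p * (p * r - (cmod q)\<^sup>2)"
    using e[of q "of_real p"] by linarith
  then show "0 < p + r \<and> (cmod q)\<^sup>2 < p * r"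
    using \<open>0 < p\<close> \<open>0 < r\<close> by (simp add: zero_less_mult_iff)
next
  assume "0 < p + r \<and> (cmod q)\<^sup>2 < p * r"
  then have "0 < p + r" and D: "0 < p * r - (cmod q)\<^sup>2"
    by auto
  \<comment> \<open>e is determinant over trace, a lower bound for the smaller eigenvalue.\<close>
  define e where "e = (p * r - (cmod q)\<^sup>2) / (p + r)"
  have "0 < e"
    using D \<open>0 < p + r\<close> by (simp add: e_def)
  have e_sum: "e * (p + r) = p * r - (cmod q)\<^sup>2"
    using \<open>0 < p + r\<close> by (simp add: e_def)
  have "p \<noteq> 0"
    using D by auto
  have "(p - e) * (p + r) = p\<^sup>2 + (cmod q)\<^sup>2"
    using e_sum by (simp add: algebra_simps power2_eq_square)
  also have "\<dots> > 0"
    using \<open>p \<noteq> 0\<close> by (simp add: add_pos_nonneg)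
  finally have "0 < p - e"
    using \<open>0 < p + r\<close> by (simp add: zero_less_mult_iff)
  moreover have "(cmod q)\<^sup>2 \<le> (p - e) * (r - e)"
    using e_sum by (simp add: algebra_simps power2_eq_square)
  ultimately have psd: "0 \<le> hermitian_form2 (p - e) (r - e) q x1 x2" for x1 x2
    by (rule hermitian_form2_nonneg)
  have "e * ((cmod x1)\<^sup>2 + (cmod x2)\<^sup>2) \<le> hermitian_form2 p r q x1 x2" for x1 x2
    using psd[of x1 x2] by (simp add: hermitian_form2_def algebra_simps)
  with \<open>0 < e\<close> show "\<exists>e>0. \<forall>x1 x2. e * ((cmod x1)\<^sup>2 + (cmod x2)\<^sup>2) \<le> hermitian_form2 p r q x1 x2"
    by blast
qed

lemma norm_vec2_sq: "(norm (x::'a::real_normed_vector^2))\<^sup>2 = (norm (x$1))\<^sup>2 + (norm (x$2))\<^sup>2"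
  by (simp add: norm_vec_def L2_set_def sum_2)

lemma norm_sq_minus_norm_matrix_vector_mult_sq:
  fixes A :: "complex^2^2" and x :: "complex^2"
  shows "(norm x)\<^sup>2 - (norm (A *v x))\<^sup>2
           = hermitian_form2 (1 - (cmod (A$1$1))\<^sup>2 - (cmod (A$2$1))\<^sup>2)
                             (1 - (cmod (A$1$2))\<^sup>2 - (cmod (A$2$2))\<^sup>2)
                             (cnj (A$1$1) * A$1$2 + cnj (A$2$1) * A$2$2) (x$1) (x$2)"
  unfolding norm_vec2_sq hermitian_form2_def cmod_power2
  by (simp add: matrix_vector_mult_def sum_2 power2_eq_square algebra_simps)

lemma mat_opnorm_less_1_iff:
  fixes A :: "complex^2^2"
  shows "mat_opnorm A < 1 \<longleftrightarrow> (norm A)\<^sup>2 < 2 \<and> (norm A)\<^sup>2 < 1 + (cmod (det A))\<^sup>2"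
proof -
  \<comment> \<open>p, r and -q are the entries of 1 - A^* A.\<close>
  define p where "p = 1 - (cmod (A$1$1))\<^sup>2 - (cmod (A$2$1))\<^sup>2"
  define r where "r = 1 - (cmod (A$1$2))\<^sup>2 - (cmod (A$2$2))\<^sup>2"
  define q where "q = cnj (A$1$1) * A$1$2 + cnj (A$2$1) * A$2$2"
  have norm_A: "(norm A)\<^sup>2 = (cmod (A$1$1))\<^sup>2 + (cmod (A$1$2))\<^sup>2 + (cmod (A$2$1))\<^sup>2 + (cmod (A$2$2))\<^sup>2"
    by (simp add: norm_vec2_sq)
  have trace_gram: "p + r = 2 - (norm A)\<^sup>2"
    by (simp add: p_def r_def norm_A)
  have gram_det: "p * r - (cmod q)\<^sup>2 = 1 - (norm A)\<^sup>2 + (cmod (det A))\<^sup>2"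
    unfolding p_def r_def q_def norm_A det_2 cmod_power2
    by (simp add: power2_eq_square algebra_simps)
  have "mat_opnorm A < 1 \<longleftrightarrow> (\<exists>e>0. \<forall>x::complex^2. e * (norm x)\<^sup>2 \<le> (norm x)\<^sup>2 - (norm (A *v x))\<^sup>2)"
    unfolding mat_opnorm_def onorm_less_1_iff[OF matrix_vector_mul_bounded_linear]
    by (simp add: algebra_simps)
  also have "\<dots> \<longleftrightarrow> (\<exists>e>0. \<forall>x1 x2. e * ((cmod x1)\<^sup>2 + (cmod x2)\<^sup>2) \<le> hermitian_form2 p r q x1 x2)"
    unfolding norm_sq_minus_norm_matrix_vector_mult_sq
    unfolding norm_vec2_sq forall_vector_2 by (simp add: p_def r_def q_def)
  also have "\<dots> \<longleftrightarrow> 0 < p + r \<and> (cmod q)\<^sup>2 < p * r"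
    by (rule hermitian_form2_coercive_iff)
  also have "\<dots> \<longleftrightarrow> (norm A)\<^sup>2 < 2 \<and> (norm A)\<^sup>2 < 1 + (cmod (det A))\<^sup>2"
    using trace_gram gram_det by argo
  finally show ?thesis .
qed

lemma mat_opnorm_less_1_iff_lie_ball_ineq:
  "mat_opnorm (A::complex^2^2) < 1 \<longleftrightarrow> lie_ball_ineq ((norm A)\<^sup>2 / 2) (det A)"
  by (simp add: mat_opnorm_less_1_iff lie_ball_ineq_def)

section \<open>The symmetrized bidisc, the tetrablock and F\<close>

lemma vector_4 [simp]:
  "(vector [x, y, z, u] :: 'a::zero^4) $ 1 = x"
  "(vector [x, y, z, u] :: 'a::zero^4) $ 2 = y"
  "(vector [x, y, z, u] :: 'a::zero^4) $ 3 = z"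
  "(vector [x, y, z, u] :: 'a::zero^4) $ 4 = u"
  unfolding vector_def by simp_all

lemma parallelogram_law:
  fixes x y :: "'a::real_inner"
  shows "(norm (x + y))\<^sup>2 + (norm (x - y))\<^sup>2 = 2 * ((norm x)\<^sup>2 + (norm y)\<^sup>2)"
  by (simp add: power2_norm_eq_inner inner_add inner_diff inner_commute)

lemma ex_sum_prod_eq: "\<exists>u v :: complex. u + v = s \<and> u * v = p"
proof (intro exI conjI)
  let ?d = "csqrt (s\<^sup>2 / 4 - p)"
  show "(s / 2 + ?d) + (s / 2 - ?d) = s"
    by simp
  have "(s / 2 + ?d) * (s / 2 - ?d) = s\<^sup>2 / 4 - ?d\<^sup>2"
    by (simp add: power2_eq_square field_simps)
  then show "(s / 2 + ?d) * (s / 2 - ?d) = p"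
    by simp
qed

lemma norm_sq_add_norm_sq_of_sum_prod:
  fixes u v :: complex
  assumes "u + v = s" "u * v = p"
  shows "(cmod u)\<^sup>2 + (cmod v)\<^sup>2 = (cmod s)\<^sup>2 / 2 + 2 * cmod (s\<^sup>2 / 4 - p)"
proof -
  have "(u - v)\<^sup>2 = 4 * (s\<^sup>2 / 4 - p)"
    unfolding assms[symmetric] by (simp add: power2_eq_square algebra_simps)
  then have "(cmod (u - v))\<^sup>2 = 4 * cmod (s\<^sup>2 / 4 - p)"
    by (metis norm_mult norm_numeral norm_power)
  then show ?thesis
    using parallelogram_law[of u v] assms(1) by simp
qed

lemma both_less_1_iff:
  fixes a b :: real
  assumes "0 \<le> a" "0 \<le> b"
  shows "a < 1 \<and> b < 1 \<longleftrightarrow> a + b < 2 \<and> a + b < 1 + a * b"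
proof -
  have "a + b < 1 + a * b \<longleftrightarrow> 0 < (1 - a) * (1 - b)"
    by (simp add: algebra_simps)
  then show ?thesis
    using assms by (auto simp: zero_less_mult_iff)
qed

lemma disc_pair_iff_lie_ball_ineq:
  "cmod l1 < 1 \<and> cmod l2 < 1 \<longleftrightarrow> lie_ball_ineq (((cmod l1)\<^sup>2 + (cmod l2)\<^sup>2) / 2) (l1 * l2)"
proof -
  have "cmod l1 < 1 \<and> cmod l2 < 1 \<longleftrightarrow> (cmod l1)\<^sup>2 < 1 \<and> (cmod l2)\<^sup>2 < 1"
    by (simp add: abs_square_less_1)
  also have "\<dots> \<longleftrightarrow> lie_ball_ineq (((cmod l1)\<^sup>2 + (cmod l2)\<^sup>2) / 2) (l1 * l2)"
    using both_less_1_iff[OF zero_le_power2 zero_le_power2, of "cmod l1" "cmod l2"]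
    unfolding lie_ball_ineq_def norm_mult power_mult_distrib by argo
  finally show ?thesis .
qed

lemma mem_symm_bidisc_iff:
  "y \<in> symm_bidisc \<longleftrightarrow> lie_ball_ineq ((cmod (y$1))\<^sup>2 / 4 + cmod ((y$1)\<^sup>2 / 4 - y$2)) (y$2)"
    (is "_ \<longleftrightarrow> lie_ball_ineq ?s _")
proof -
  have roots: "cmod l1 < 1 \<and> cmod l2 < 1 \<longleftrightarrow> lie_ball_ineq ?s (y$2)"
    if "l1 + l2 = y$1" "l1 * l2 = y$2" for l1 l2
    using disc_pair_iff_lie_ball_ineq[of l1 l2] norm_sq_add_norm_sq_of_sum_prod[OF that] that(2)
    by (simp add: add_divide_distrib)
  have "y \<in> symm_bidisc \<longleftrightarrow> (\<exists>l1 l2. l1 + l2 = y$1 \<and> l1 * l2 = y$2 \<and> cmod l1 < 1 \<and> cmod l2 < 1)"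
    unfolding symm_bidisc_def by (auto simp: vec_eq_iff forall_2; metis)
  then show ?thesis
    using roots ex_sum_prod_eq by meson
qed

lemma mem_tetrablock_iff:
  "y \<in> tetrablock \<longleftrightarrow>
     lie_ball_ineq (((cmod (y$1))\<^sup>2 + (cmod (y$2))\<^sup>2) / 2 + cmod (y$1 * y$2 - y$3)) (y$3)"
    (is "_ \<longleftrightarrow> lie_ball_ineq ?s _")
proof -
  let ?fibre = "\<lambda>A::complex^2^2. A$1$1 = y$1 \<and> A$2$2 = y$2 \<and> A$1$2 = A$2$1
                                 \<and> (A$1$2)\<^sup>2 = y$1 * y$2 - y$3"
  have opnorm_iff: "mat_opnorm A < 1 \<longleftrightarrow> lie_ball_ineq ?s (y$3)" if "?fibre A" for A
  proof -
    have "det A = y$3"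
      using that by (auto simp: det_2 power2_eq_square)
    moreover have "(cmod (A$1$2))\<^sup>2 = cmod (y$1 * y$2 - y$3)"
      using that by (auto simp flip: norm_power)
    then have "(norm A)\<^sup>2 / 2 = ?s"
      using that by (simp add: norm_vec2_sq field_simps)
    ultimately show ?thesis
      by (simp only: mat_opnorm_less_1_iff_lie_ball_ineq)
  qed
  have "y \<in> tetrablock \<longleftrightarrow> (\<exists>A. ?fibre A \<and> mat_opnorm A < 1)"
    unfolding tetrablock_def by (auto simp: vec_eq_iff forall_3 algebra_simps; metis)
  moreover have "\<exists>A. ?fibre A"
    by (intro exI[of _ "vector [vector [y$1, csqrt (y$1 * y$2 - y$3)],
                                vector [csqrt (y$1 * y$2 - y$3), y$2]]"]) simp
  ultimately show ?thesis
    using opnorm_iff by meson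
qed

lemma mem_domF_iff:
  "y \<in> domF \<longleftrightarrow>
     lie_ball_ineq (((cmod (y$1))\<^sup>2 + (cmod (y$2))\<^sup>2) / 2 + (cmod (y$4))\<^sup>2 / 4
                    + cmod ((y$4)\<^sup>2 / 4 - (y$1 * y$2 - y$3))) (y$3)"
    (is "_ \<longleftrightarrow> lie_ball_ineq ?s _")
proof -
  let ?fibre = "\<lambda>A::complex^2^2. A$1$1 = y$1 \<and> A$2$2 = y$2 \<and> A$1$2 + A$2$1 = y$4
                                 \<and> A$1$2 * A$2$1 = y$1 * y$2 - y$3"
  have opnorm_iff: "mat_opnorm A < 1 \<longleftrightarrow> lie_ball_ineq ?s (y$3)" if "?fibre A" for A
  proof -
    have "det A = y$3"
      using that by (simp add: det_2)
    moreover have "(cmod (A$1$2))\<^sup>2 + (cmod (A$2$1))\<^sup>2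
                     = (cmod (y$4))\<^sup>2 / 2 + 2 * cmod ((y$4)\<^sup>2 / 4 - (y$1 * y$2 - y$3))"
      using that by (intro norm_sq_add_norm_sq_of_sum_prod) auto
    then have "(norm A)\<^sup>2 / 2 = ?s"
      using that by (simp add: norm_vec2_sq field_simps)
    ultimately show ?thesis
      by (simp only: mat_opnorm_less_1_iff_lie_ball_ineq)
  qed
  have "y \<in> domF \<longleftrightarrow> (\<exists>A. ?fibre A \<and> mat_opnorm A < 1)"
    unfolding domF_def by (auto simp: vec_eq_iff forall_4 algebra_simps; metis)
  moreover have "\<exists>A. ?fibre A"
  proof -
    obtain u v where "u + v = y$4" "u * v = y$1 * y$2 - y$3"
      using ex_sum_prod_eq by blast
    then show ?thesis
      by (intro exI[of _ "vector [vector [y$1, u], vector [v, y$2]]"]) simp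
  qed
  ultimately show ?thesis
    using opnorm_iff by meson
qed

section \<open>The biholomorphisms\<close>

lemma holo_vec_on_vector_2:
  assumes "cpoly_fun p1" "cpoly_fun p2"
  shows "holo_vec_on (\<lambda>w. vector [p1 w, p2 w] :: complex^2) S"
proof (rule holo_vec_on_cpoly_fun)
  fix i :: 2
  show "cpoly_fun (\<lambda>w. (vector [p1 w, p2 w] :: complex^2) $ i)"
    using exhaust_2[of i] assms by auto
qed

lemma holo_vec_on_vector_3:
  assumes "cpoly_fun p1" "cpoly_fun p2" "cpoly_fun p3"
  shows "holo_vec_on (\<lambda>w. vector [p1 w, p2 w, p3 w] :: complex^3) S"
proof (rule holo_vec_on_cpoly_fun)
  fix i :: 3
  show "cpoly_fun (\<lambda>w. (vector [p1 w, p2 w, p3 w] :: complex^3) $ i)"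
    using exhaust_3[of i] assms by auto
qed

lemma holo_vec_on_vector_4:
  assumes "cpoly_fun p1" "cpoly_fun p2" "cpoly_fun p3" "cpoly_fun p4"
  shows "holo_vec_on (\<lambda>w. vector [p1 w, p2 w, p3 w, p4 w] :: complex^4) S"
proof (rule holo_vec_on_cpoly_fun)
  fix i :: 4
  show "cpoly_fun (\<lambda>w. (vector [p1 w, p2 w, p3 w, p4 w] :: complex^4) $ i)"
    using exhaust_4[of i] assms by auto
qed

lemma sum_sq_half_diff_i_half_sum: "((u - v) / 2)\<^sup>2 + (- \<i> * (u + v) / 2)\<^sup>2 = - (u * v)"
  by (simp add: power2_eq_square field_simps)

lemma sum_norm_sq_half_diff_i_half_sum:
  "(cmod ((u - v) / 2))\<^sup>2 + (cmod (- \<i> * (u + v) / 2))\<^sup>2 = ((cmod u)\<^sup>2 + (cmod v)\<^sup>2) / 2"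
  using parallelogram_law[of u v] by (simp add: norm_mult norm_divide power_divide)

lemma biholomorphism_LL_symm_bidisc:
  "biholomorphism (\<lambda>w::complex^2. vector [2 * \<i> * w$2, - w$1 - (w$2)\<^sup>2] :: complex^2)
     LL symm_bidisc"
    (is "biholomorphism ?f _ _")
proof -
  let ?g = "\<lambda>y::complex^2. vector [(y$1)\<^sup>2 / 4 - y$2, - \<i> * y$1 / 2] :: complex^2"
  have "?g y \<in> LL \<longleftrightarrow> y \<in> symm_bidisc" for y
  proof -
    have sq: "(- \<i> * y$1 / 2)\<^sup>2 = - ((y$1)\<^sup>2 / 4)"
      and norm_sq: "(cmod (- \<i> * y$1 / 2))\<^sup>2 = (cmod (y$1))\<^sup>2 / 4"
      by (simp_all add: power_mult_distrib power_divide norm_mult norm_divide)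
    show ?thesis
      unfolding mem_LL_iff sum_UNIV_minus_1_2 mem_symm_bidisc_iff vector_2 sq norm_sq
      by (simp add: add.commute)
  qed
  then have "symm_bidisc = ?g -` LL"
    by auto
  moreover have "biholomorphism ?f LL (?g -` LL)"
    by (intro biholomorphism_if_holomorphic_inverse holo_vec_on_vector_2 open_LL cpoly_fun.intros)
      (simp_all add: vec_eq_iff forall_2 power_mult_distrib power_divide)
  ultimately show ?thesis
    by simp
qed

lemma biholomorphism_LL_tetrablock:
  "biholomorphism (\<lambda>w::complex^3. vector [w$2 + \<i> * w$3, - w$2 + \<i> * w$3,
                                          - (w$3)\<^sup>2 - (w$2)\<^sup>2 - w$1] :: complex^3)
     LL tetrablock"
    (is "biholomorphism ?f _ _")
proof -
  let ?g = "\<lambda>y::complex^3.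
    vector [y$1 * y$2 - y$3, (y$1 - y$2) / 2, - \<i> * (y$1 + y$2) / 2] :: complex^3"
  have "?g y \<in> LL \<longleftrightarrow> y \<in> tetrablock" for y
    unfolding mem_LL_iff sum_UNIV_minus_1_3 mem_tetrablock_iff vector_3 add.assoc
      sum_sq_half_diff_i_half_sum sum_norm_sq_half_diff_i_half_sum
    by (simp add: add.commute)
  then have "tetrablock = ?g -` LL"
    by auto
  moreover have "biholomorphism ?f LL (?g -` LL)"
    by (intro biholomorphism_if_holomorphic_inverse holo_vec_on_vector_3 open_LL cpoly_fun.intros)
      (simp_all add: vec_eq_iff forall_3 power2_eq_square field_simps)
  ultimately show ?thesis
    by simp
qed

lemma biholomorphism_LL_domF:
  "biholomorphism (\<lambda>w::complex^4. vector [w$3 + \<i> * w$4, - w$3 + \<i> * w$4,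
                                          - (w$2)\<^sup>2 - (w$3)\<^sup>2 - (w$4)\<^sup>2 - w$1, 2 * w$2] :: complex^4)
     LL domF"
    (is "biholomorphism ?f _ _")
proof -
  let ?g = "\<lambda>y::complex^4. vector [y$1 * y$2 - y$3 - (y$4)\<^sup>2 / 4, y$4 / 2,
                                   (y$1 - y$2) / 2, - \<i> * (y$1 + y$2) / 2] :: complex^4"
  have "?g y \<in> LL \<longleftrightarrow> y \<in> domF" for y
  proof -
    have "cmod (y$1 * y$2 - y$3 - (y$4)\<^sup>2 / 4) = cmod ((y$4)\<^sup>2 / 4 - (y$1 * y$2 - y$3))"
      by (simp add: norm_minus_commute)
    then show ?thesis
      unfolding mem_LL_iff sum_UNIV_minus_1_4 mem_domF_iff vector_4 add.assoc
        sum_sq_half_diff_i_half_sum sum_norm_sq_half_diff_i_half_sum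
      by (simp add: norm_divide power_divide add_ac)
  qed
  then have "domF = ?g -` LL"
    by auto
  moreover have "biholomorphism ?f LL (?g -` LL)"
    by (intro biholomorphism_if_holomorphic_inverse holo_vec_on_vector_4 open_LL cpoly_fun.intros)
      (simp_all add: vec_eq_iff forall_4 power2_eq_square field_simps)
  ultimately show ?thesis
    by simp
qed

theorem corollary3p9:
  shows "biholomorphism (\<lambda>w::complex^2. vector [2 * \<i> * w$2, - w$1 - (w$2)\<^sup>2] :: complex^2)
            (LL :: (complex^2) set) symm_bidisc
       \<and> biholomorphism (\<lambda>w::complex^3. vector [w$2 + \<i> * w$3, - w$2 + \<i> * w$3,
                                               - (w$3)\<^sup>2 - (w$2)\<^sup>2 - w$1] :: complex^3)
            (LL :: (complex^3) set) tetrablock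
       \<and> biholomorphism (\<lambda>w::complex^4. vector [w$3 + \<i> * w$4, - w$3 + \<i> * w$4,
                                               - (w$2)\<^sup>2 - (w$3)\<^sup>2 - (w$4)\<^sup>2 - w$1, 2 * w$2] :: complex^4)
            (LL :: (complex^4) set) domF"
  by (intro conjI biholomorphism_LL_symm_bidisc biholomorphism_LL_tetrablock biholomorphism_LL_domF)

end
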